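(* Let $d\ge2$ be an integer and $p$ a prime with $p\equiv 3\pmod 4$. Let $\alpha_n=\frac{(1/2)_n}{n!}$, where $(x)_n=x(x+1)\cdots(x+n-1)$, let $F_p(z)=\sum_{n=0}^{p-1}\alpha_n^d z^n$ and $\epsilon_p=(-1)^{d(p-1)/2}$. Then $$F_p(-\epsilon_p)\equiv 0\pmod{p}.$$
   Context: Congruences are in the ring $\mathbb{Z}_{(p)}$ of $p$-integral rationals. *)

theory Defs
  imports Complex_Main "HOL-Computational_Algebra.Primes"
begin

text \<open>Congruence in the ring Z_(p) of p-integral rationals:
  x = y (mod p) iff x - y = p * (a / b) with integers a, b and p not dividing b.\<close>
definition cong_Zp :: "rat \<Rightarrow> rat \<Rightarrow> nat \<Rightarrow> bool" where
  "cong_Zp x y p \<longleftrightarrow>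
     (\<exists>a b :: int. \<not> int p dvd b \<and> x - y = of_nat p * (of_int a / of_int b))"

definition alpha :: "nat \<Rightarrow> rat" where
  "alpha n = pochhammer (1/2) n / fact n"

definition F :: "nat \<Rightarrow> nat \<Rightarrow> rat \<Rightarrow> rat" where
  "F d p z = (\<Sum>n = 0..p-1. alpha n ^ d * z ^ n)"

definition eps :: "nat \<Rightarrow> nat \<Rightarrow> rat" where
  "eps d p = (-1) ^ (d * (p - 1) div 2)"

end

theory Submission
  imports Defs "HOL-Number_Theory.Number_Theory"
begin

text \<open>Write p = 2m + 1. Then alpha n = C(2n, n) / 4^n, and multiplying by n! turns both
  C(2n, n) and (-4)^n C(m, n) into products whose factors 2(2i + 1) and -4(m - i) agree mod p.
  So alpha n == (-1)^n C(m, n) in Z_(p) for n < p, and F_p(z) == sum_{n <= m} C(m, n)^d ((-1)^d z)^n.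
  For p == 3 (mod 4) the number m is odd, so eps_p = (-1)^d, and at z = -eps_p the sum becomes
  sum_n (-1)^n C(m, n)^d, which vanishes because the reflection n -> m - n changes the sign of
  every term.\<close>

lemma cong_Zp_refl:
  assumes "p \<noteq> 1"
  shows "cong_Zp x x p"
proof -
  have "\<not> int p dvd 1" "x - x = of_nat p * (of_int 0 / of_int 1)"
    using assms by simp_all
  then show ?thesis
    unfolding cong_Zp_def by blast
qed

lemma cong_Zp_add:
  assumes "prime p" "cong_Zp x y p" "cong_Zp x' y' p"
  shows "cong_Zp (x + x') (y + y') p"
proof -
  obtain a b where b: "\<not> int p dvd b" and xy: "x - y = of_nat p * (of_int a / of_int b)"
    using assms(2) unfolding cong_Zp_def by blast
  obtain a' b' where b': "\<not> int p dvd b'" and xy': "x' - y' = of_nat p * (of_int a' / of_int b')"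
    using assms(3) unfolding cong_Zp_def by blast
  have "b \<noteq> 0" "b' \<noteq> 0"
    using b b' by auto
  have "(x + x') - (y + y') = (x - y) + (x' - y')"
    by simp
  also have "\<dots> = of_nat p * (of_int (a * b' + a' * b) / of_int (b * b'))"
    unfolding xy xy' using \<open>b \<noteq> 0\<close> \<open>b' \<noteq> 0\<close> by (simp add: field_simps)
  finally have "(x + x') - (y + y') = of_nat p * (of_int (a * b' + a' * b) / of_int (b * b'))" .
  moreover have "\<not> int p dvd b * b'"
    using assms(1) b b' by (simp add: prime_dvd_mult_iff)
  ultimately show ?thesis
    unfolding cong_Zp_def by blast
qed

lemma cong_Zp_sum:
  assumes "prime p" "\<And>i. i \<in> A \<Longrightarrow> cong_Zp (f i) (g i) p"
  shows "cong_Zp (\<Sum>i\<in>A. f i) (\<Sum>i\<in>A. g i) p"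
  using assms(2)
proof (induction A rule: infinite_finite_induct)
  case (insert i A)
  then show ?case
    using cong_Zp_add[OF assms(1)] by simp
qed (use assms(1) in \<open>auto intro: cong_Zp_refl\<close>)

lemma cong_Zp_of_int_divide:
  assumes "[N = D * R] (mod int p)" "\<not> int p dvd D"
  shows "cong_Zp (of_int N / of_int D) (of_int R) p"
proof -
  obtain k where "N - D * R = int p * k"
    using assms(1) by (metis cong_iff_dvd_diff dvdE)
  then have k: "of_int N - of_int D * of_int R = (of_nat p * of_int k :: rat)"
    by (metis of_int_diff of_int_mult of_int_of_nat_eq)
  have "D \<noteq> 0"
    using assms(2) by auto
  then have "of_int N / of_int D - of_int R = of_nat p * (of_int k / (of_int D :: rat))"
    using k by (simp add: field_simps)
  then show ?thesis
    unfolding cong_Zp_def using assms(2) by blast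
qed

lemma alpha_eq_central_binomial: "alpha n = of_nat (2*n choose n) / 4^n"
proof -
  have "fact n * fact n * of_nat (2*n choose n) = (of_nat (fact n * fact n * (2*n choose n)) :: rat)"
    by simp
  also have "\<dots> = fact (2*n)"
    using binomial_fact_lemma[of n "2*n"] by simp
  also have "\<dots> = 4^n * pochhammer (1/2) n * fact n"
    by (simp add: fact_double power_mult)
  finally have "pochhammer (1/2) n = fact n * of_nat (2*n choose n) / (4^n :: rat)"
    by (simp add: field_simps)
  then show ?thesis
    by (simp add: alpha_def)
qed

lemma fact_mult_central_binomial:
  "fact n * int (2*n choose n) = (\<Prod>i<n. 2 * (2 * int i + 1))"
proof -
  have "(fact n * of_nat (2*n choose n) :: rat) = 4^n * pochhammer (1/2) n"
    using alpha_eq_central_binomial[of n] by (simp add: alpha_def field_simps)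
  also have "\<dots> = (\<Prod>i<n. 4 * (1/2 + of_nat i))"
    by (simp only: pochhammer_prod atLeast0LessThan prod.distrib prod_constant card_lessThan)
  also have "\<dots> = (\<Prod>i<n. 2 * (2 * of_nat i + 1))"
    by (rule prod.cong) (simp_all add: algebra_simps)
  finally have "(of_int (fact n * int (2*n choose n)) :: rat) = of_int (\<Prod>i<n. 2 * (2 * int i + 1))"
    by simp
  then show ?thesis
    by (simp only: of_int_eq_iff)
qed

lemma fact_mult_binomial:
  "fact n * int (m choose n) = (\<Prod>i<n. int m - int i)"
proof -
  have "(fact n * of_nat (m choose n) :: rat) = (\<Prod>i<n. of_nat m - of_nat i)"
    by (simp add: binomial_gbinomial gbinomial_mult_fact atLeast0LessThan)
  then have "(of_int (fact n * int (m choose n)) :: rat) = of_int (\<Prod>i<n. int m - int i)"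
    by simp
  then show ?thesis
    by (simp only: of_int_eq_iff)
qed

lemma central_binomial_cong:
  assumes "prime p" "p = 2*m + 1" "n < p"
  shows "[int (2*n choose n) = (-4)^n * int (m choose n)] (mod int p)"
proof -
  have "[(\<Prod>i<n. 2 * (2 * int i + 1)) = (\<Prod>i<n. -4 * (int m - int i))] (mod int p)"
  proof (rule cong_prod)
    fix i
    have "2 * (2 * int i + 1) - -4 * (int m - int i) = int p * 2"
      using assms(2) by simp
    then show "[2 * (2 * int i + 1) = -4 * (int m - int i)] (mod int p)"
      by (simp only: cong_iff_dvd_diff dvd_triv_left)
  qed
  moreover have "fact n * ((-4)^n * int (m choose n)) = (\<Prod>i<n. -4 * (int m - int i))"
    by (subst mult.left_commute) (simp only: fact_mult_binomial prod.distrib prod_constant card_lessThan)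
  ultimately have "[fact n * int (2*n choose n) = fact n * ((-4)^n * int (m choose n))] (mod int p)"
    by (simp only: fact_mult_central_binomial)
  moreover have "coprime (fact n) (int p)"
  proof -
    have "coprime p (fact n)"
      using assms(1,3) by (simp add: prime_imp_coprime prime_dvd_fact_iff)
    then show ?thesis
      by (metis coprime_commute coprime_int_iff of_nat_fact)
  qed
  ultimately show ?thesis
    using cong_mult_lcancel by blast
qed

lemma alpha_power_cong:
  fixes z :: int
  assumes "prime p" "p = 2*m + 1" "n < p"
  shows "cong_Zp (alpha n ^ d * of_int z ^ n) (of_int (int (m choose n) ^ d * ((-1)^d * z)^n)) p"
proof -
  have alpha_eq: "alpha n ^ d * of_int z ^ n = of_int (int (2*n choose n) ^ d * z ^ n) / of_int ((4^n)^d)"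
    by (simp add: alpha_eq_central_binomial power_divide field_simps)
  have numerator_cong: "[int (2*n choose n) ^ d * z ^ n = (4^n)^d * (int (m choose n) ^ d * ((-1)^d * z)^n)] (mod int p)"
  proof -
    have "[int (2*n choose n) ^ d * z ^ n = ((-4)^n * int (m choose n)) ^ d * z ^ n] (mod int p)"
      using central_binomial_cong[OF assms] by (intro cong_mult cong_pow cong_refl)
    also have "((-4)^n * int (m choose n)) ^ d * z ^ n = (4^n)^d * (int (m choose n) ^ d * ((-1)^d * z)^n)"
    proof -
      have "((-1::int)^n)^d = ((-1)^d)^n"
        by (metis mult.commute power_mult)
      then show ?thesis
        by (simp add: power_mult_distrib power_minus[of 4] power_mult)
    qed
    finally show ?thesis .
  qed
  have p_not_dvd_denominator: "\<not> int p dvd (4^n)^d"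
  proof
    assume "int p dvd (4^n)^d"
    then have "int p dvd 2^(2*n*d)"
      by (simp add: power_mult)
    then have "p dvd 2"
      using assms(1) by (metis prime_dvd_power_int prime_nat_int_transfer of_nat_dvd_iff of_nat_numeral)
    then have "p \<le> 2"
      by (simp add: dvd_imp_le)
    then show False
      using assms(1,2) by (cases m) auto
  qed
  show ?thesis
    unfolding alpha_eq by (rule cong_Zp_of_int_divide[OF numerator_cong p_not_dvd_denominator])
qed

lemma alternating_sum_binomial_powers:
  assumes "odd m"
  shows "(\<Sum>n=0..m. int (m choose n) ^ d * (-1)^n) = 0"
proof -
  let ?S = "\<Sum>n=0..m. int (m choose n) ^ d * (-1)^n"
  have "?S = (\<Sum>n=0..m. int (m choose (m - n)) ^ d * (-1)^(m - n))"
    by (subst sum.atLeastAtMost_rev) simp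
  also have "\<dots> = - ?S"
    unfolding sum_negf[symmetric]
  proof (rule sum.cong[OF refl])
    fix n assume "n \<in> {0..m}"
    then show "int (m choose (m - n)) ^ d * (-1)^(m - n) = - (int (m choose n) ^ d * (-1)^n)"
      using assms by (auto simp: binomial_symmetric[symmetric] minus_one_power_iff)
  qed
  finally show ?thesis
    by simp
qed

lemma F_cong_binomial_sum:
  fixes z :: int
  assumes "prime p" "p = 2*m + 1" "d > 0"
  shows "cong_Zp (F d p (of_int z)) (of_int (\<Sum>n=0..m. int (m choose n) ^ d * ((-1)^d * z)^n)) p"
proof -
  have "cong_Zp (\<Sum>n=0..2*m. alpha n ^ d * of_int z ^ n)
      (\<Sum>n=0..2*m. of_int (int (m choose n) ^ d * ((-1)^d * z)^n)) p"
    using assms by (intro cong_Zp_sum alpha_power_cong) auto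
  moreover have "(\<Sum>n=0..2*m. of_int (int (m choose n) ^ d * ((-1)^d * z)^n))
      = (of_int (\<Sum>n=0..m. int (m choose n) ^ d * ((-1)^d * z)^n) :: rat)"
    \<comment> \<open>the terms with m < n vanish only because d > 0\<close>
    unfolding of_int_sum[symmetric] using assms(3)
    by (intro arg_cong[where f = of_int] sum.mono_neutral_right) (auto simp: binomial_eq_0)
  moreover have "p - 1 = 2*m"
    using assms(2) by simp
  ultimately show ?thesis
    unfolding F_def by simp
qed

theorem corollary2p4:
  fixes d p :: nat
  assumes "d \<ge> 2" and "prime p" and "p mod 4 = 3"
  shows "cong_Zp (F d p (- eps d p)) 0 p"
proof -
  define m where "m = p div 2"
  have p: "p = 2*m + 1" and "odd m"
    using assms(3) unfolding m_def by presburger+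
  have "d * (p - 1) div 2 = m * d"
    by (simp add: p)
  then have eps_eq: "- eps d p = of_int (- ((-1)^d))"
    using \<open>odd m\<close> by (simp add: eps_def power_mult)
  have sum_eq: "(\<Sum>n=0..m. int (m choose n) ^ d * ((-1)^d * - ((-1)^d))^n) = 0"
    using alternating_sum_binomial_powers[OF \<open>odd m\<close>] by (simp flip: power_mult_distrib)
  have "cong_Zp (F d p (of_int (- ((-1)^d))))
      (of_int (\<Sum>n=0..m. int (m choose n) ^ d * ((-1)^d * - ((-1)^d))^n)) p"
    using assms(1,2) p by (intro F_cong_binomial_sum) auto
  then show ?thesis
    unfolding eps_eq sum_eq of_int_0 .
qed

end
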